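(* Let $\mathcal{C}=\{K_1,\dots,K_m\}$ be a covering of a finite set $E$. Let $A=\{A_1,\dots,A_s\}$ be the collection of all nonempty sets of the form $K_i-\bigcup_{j\neq i}K_j$ ($1\le i\le m$), and let $B=E-\bigcup_{i=1}^sA_i$. Then $\{A_1,\dots,A_s\}\cup\{\{x\}:x\in B\}$ is exactly the set of atoms of the lattice $\mathcal{L}(M(\mathcal{C}))$.
   Context: A covering of a finite set $E$ is a family of nonempty subsets of $E$ whose union is $E$. For a family $\mathcal{C}=\{K_1,\dots,K_m\}$ of subsets of $E$, a partial transversal is a set $\{e_1,\dots,e_k\}$ of distinct elements such that $e_j\in K_{i_j}$ for some distinct indices $i_1,\dots,i_k$; the transversal matroid $M(\mathcal{C})$ is the matroid on $E$ whose independent sets are the partial transversals of $\mathcal{C}$. For a matroid $M$ with rank function $r_M$, $cl_M(X)=\{a\in E:r_M(X\cup\{a\})=r_M(X)\}$; $X$ is closed if $cl_M(X)=X$. $\mathcal{L}(M)$ denotes the lattice of all closed sets of $M$ ordered by inclusion (meet is intersection, join is $cl_M$ of the union); its least element is $cl_M(\emptyset)$. An atom of a lattice with least element $0$ is an element covering $0$. *)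

theory Defs
  imports Main
begin

text \<open>A family K_1..K_m is represented as K :: nat => 'a set with indices i < m.\<close>

definition is_covering :: "'a set \<Rightarrow> (nat \<Rightarrow> 'a set) \<Rightarrow> nat \<Rightarrow> bool" where
  "is_covering E K m \<longleftrightarrow> (\<forall>i<m. K i \<noteq> {} \<and> K i \<subseteq> E) \<and> (\<Union>i<m. K i) = E"

definition partial_transversal :: "(nat \<Rightarrow> 'a set) \<Rightarrow> nat \<Rightarrow> 'a set \<Rightarrow> bool" where
  "partial_transversal K m X \<longleftrightarrow> finite X \<and>
     (\<exists>f. inj_on f X \<and> (\<forall>x\<in>X. f x < m \<and> x \<in> K (f x)))"

definition mrank :: "('a set \<Rightarrow> bool) \<Rightarrow> 'a set \<Rightarrow> nat" where
  "mrank indep X = Max {card I | I. I \<subseteq> X \<and> indep I}"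

definition mcl :: "'a set \<Rightarrow> ('a set \<Rightarrow> bool) \<Rightarrow> 'a set \<Rightarrow> 'a set" where
  "mcl E indep X = {a \<in> E. mrank indep (insert a X) = mrank indep X}"

definition closed_sets :: "'a set \<Rightarrow> ('a set \<Rightarrow> bool) \<Rightarrow> 'a set set" where
  "closed_sets E indep = {X. X \<subseteq> E \<and> mcl E indep X = X}"

definition lattice_atoms :: "'a set \<Rightarrow> ('a set \<Rightarrow> bool) \<Rightarrow> 'a set set" where
  "lattice_atoms E indep = {F \<in> closed_sets E indep. mcl E indep {} \<subset> F \<and>
      \<not> (\<exists>G \<in> closed_sets E indep. mcl E indep {} \<subset> G \<and> G \<subset> F)}"

end

theory Submission
  imports Defs
begin

text \<open>Call \<open>a\<close> and \<open>b\<close> parallel if they are equal or both lie in exactly one block, the same one.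
  In the transversal matroid a set of parallel elements has rank at most 1 (all of them can only
  be matched to that block), while two non-parallel elements can be matched to distinct blocks.
  Hence the parallel class of \<open>a\<close> is the closure of \<open>{a}\<close>: it is closed, and by an exchange of
  equal-incidence elements every closed set containing \<open>a\<close> contains it. As no element is a loop,
  the atoms are exactly the parallel classes, which are the private parts
  \<open>K\<^sub>i - \<Union>\<^sub>j\<^sub>\<noteq>\<^sub>i K\<^sub>j\<close> for elements in a single block and singletons otherwise.\<close>

locale bounded_independence =
  fixes indep :: "'a set \<Rightarrow> bool" and n :: nat
  assumes indep_empty: "indep {}"
    and card_le_bound: "indep I \<Longrightarrow> card I \<le> n"
begin

lemma finite_independent_cards: "finite {card I | I. I \<subseteq> X \<and> indep I}"
  by (rule finite_subset[of _ "{..n}"]) (auto dest: card_le_bound)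

lemma card_le_mrank: "I \<subseteq> X \<Longrightarrow> indep I \<Longrightarrow> card I \<le> mrank indep X"
  unfolding mrank_def by (rule Max_ge[OF finite_independent_cards]) blast

lemma mrank_witness:
  obtains I where "I \<subseteq> X" "indep I" "card I = mrank indep X"
proof -
  have "{card I | I. I \<subseteq> X \<and> indep I} \<noteq> {}" using indep_empty by blast
  from Max_in[OF finite_independent_cards this] show ?thesis
    using that unfolding mrank_def by auto
qed

lemma mrank_mono: "X \<subseteq> Y \<Longrightarrow> mrank indep X \<le> mrank indep Y"
  by (metis card_le_mrank mrank_witness order_trans)

lemma mrank_empty: "mrank indep {} = 0"
  by (metis card_0_eq finite.emptyI mrank_witness subset_empty)

lemma mcl_empty_eq_empty:
  assumes "\<And>a. a \<in> E \<Longrightarrow> indep {a}"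
  shows "mcl E indep {} = {}"
proof -
  have "mrank indep {a} \<noteq> mrank indep {}" if "a \<in> E" for a
    using card_le_mrank[of "{a}" "{a}"] assms[OF that] mrank_empty by simp
  then show ?thesis unfolding mcl_def by auto
qed

end

lemma minimal_nonempty_members_eq_image:
  assumes members: "\<And>a. a \<in> E \<Longrightarrow> P a \<in> \<F>"
    and centre: "\<And>a. a \<in> E \<Longrightarrow> a \<in> P a"
    and least: "\<And>F a. F \<in> \<F> \<Longrightarrow> a \<in> F \<Longrightarrow> P a \<subseteq> F"
    and sym: "\<And>a b. b \<in> P a \<Longrightarrow> a \<in> P b"
    and bounded: "\<And>F. F \<in> \<F> \<Longrightarrow> F \<subseteq> E"
  shows "{F \<in> \<F>. {} \<subset> F \<and> \<not> (\<exists>G \<in> \<F>. {} \<subset> G \<and> G \<subset> F)} = P ` E"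
proof (intro equalityI subsetI)
  fix F assume "F \<in> {F \<in> \<F>. {} \<subset> F \<and> \<not> (\<exists>G \<in> \<F>. {} \<subset> G \<and> G \<subset> F)}"
  then have F: "F \<in> \<F>" "{} \<subset> F" and minimal: "\<not> (\<exists>G \<in> \<F>. {} \<subset> G \<and> G \<subset> F)" by auto
  then obtain a where "a \<in> F" by auto
  with F bounded have "a \<in> E" "P a \<subseteq> F" using least by auto
  with minimal members centre have "F = P a" by blast
  with \<open>a \<in> E\<close> show "F \<in> P ` E" by blast
next
  fix F assume "F \<in> P ` E"
  then obtain a where a: "a \<in> E" "F = P a" by blast
  have "\<not> G \<subset> P a" if "G \<in> \<F>" "b \<in> G" for G b
  proof
    assume "G \<subset> P a"
    with that have "a \<in> P b" "P b \<subseteq> G" using sym least by auto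
    with that \<open>G \<subset> P a\<close> least show False by blast
  qed
  then show "F \<in> {F \<in> \<F>. {} \<subset> F \<and> \<not> (\<exists>G \<in> \<F>. {} \<subset> G \<and> G \<subset> F)}"
    using a members centre by blast
qed

definition incidences :: "(nat \<Rightarrow> 'a set) \<Rightarrow> nat \<Rightarrow> 'a \<Rightarrow> nat set" where
  "incidences K m a = {i. i < m \<and> a \<in> K i}"

definition private_part :: "(nat \<Rightarrow> 'a set) \<Rightarrow> nat \<Rightarrow> nat \<Rightarrow> 'a set" where
  "private_part K m i = K i - (\<Union>j\<in>{..<m} - {i}. K j)"

definition parallel_class :: "(nat \<Rightarrow> 'a set) \<Rightarrow> nat \<Rightarrow> 'a \<Rightarrow> 'a set" where
  "parallel_class K m a =
     {b. b = a \<or> (\<exists>i. incidences K m a = {i} \<and> incidences K m b = {i})}"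

lemma partial_transversal_iff_incidences:
  "partial_transversal K m I \<longleftrightarrow>
     finite I \<and> (\<exists>f. inj_on f I \<and> (\<forall>x\<in>I. f x \<in> incidences K m x))"
  unfolding partial_transversal_def incidences_def by simp

lemma partial_transversal_card_le:
  assumes "partial_transversal K m I"
  shows "card I \<le> m"
proof -
  obtain f where "inj_on f I" "\<forall>x\<in>I. f x < m"
    using assms unfolding partial_transversal_def by auto
  then have "card I \<le> card {..<m}" by (intro card_inj_on_le[of f I]) auto
  then show ?thesis by simp
qed

interpretation transversal: bounded_independence "partial_transversal K m" m
  for K :: "nat \<Rightarrow> 'a set" and m :: nat
proof
  show "partial_transversal K m {}" by (simp add: partial_transversal_def)
qed (rule partial_transversal_card_le)

lemma partial_transversal_pair:
  assumes "i \<in> incidences K m a" "j \<in> incidences K m b" "i \<noteq> j"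
  shows "partial_transversal K m {a, b}"
  unfolding partial_transversal_iff_incidences
  using assms by (intro conjI exI[of _ "\<lambda>x. if x = a then i else j"]) (auto simp: inj_on_def)

lemma partial_transversal_exchange:
  assumes I: "partial_transversal K m I" and "b \<in> I" "a \<notin> I"
    and "incidences K m b \<subseteq> incidences K m a"
  shows "partial_transversal K m (insert a (I - {b}))"
proof -
  obtain f where f: "finite I" "inj_on f I" "\<forall>x\<in>I. f x \<in> incidences K m x"
    using I unfolding partial_transversal_iff_incidences by blast
  have "inj_on (f(a := f b)) (insert a (I - {b}))"
    using f(2) assms(2,3) by (auto simp: inj_on_def)
  with f assms(2,4) show ?thesis
    unfolding partial_transversal_iff_incidences
    by (intro conjI exI[of _ "f(a := f b)"]) auto
qed

lemma self_in_parallel_class: "a \<in> parallel_class K m a"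
  unfolding parallel_class_def by simp

lemma parallel_class_sym: "b \<in> parallel_class K m a \<Longrightarrow> a \<in> parallel_class K m b"
  unfolding parallel_class_def by auto

lemma mrank_parallel_class_le_1: "mrank (partial_transversal K m) (parallel_class K m a) \<le> 1"
proof -
  obtain I where I: "I \<subseteq> parallel_class K m a" "partial_transversal K m I"
    "card I = mrank (partial_transversal K m) (parallel_class K m a)"
    by (rule transversal.mrank_witness)
  then obtain f where f: "inj_on f I" "\<forall>x\<in>I. f x \<in> incidences K m x"
    unfolding partial_transversal_iff_incidences by blast
  show ?thesis
  proof (cases "\<exists>i. incidences K m a = {i}")
    case True
    then obtain i where "incidences K m a = {i}" by blast
    with I(1) f(2) have "f ` I \<subseteq> {i}" unfolding parallel_class_def by auto
    then have "card I \<le> card {i}" using card_inj_on_le[OF f(1)] by blast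
    with I(3) show ?thesis by simp
  next
    case False
    then have "I \<subseteq> {a}" using I(1) unfolding parallel_class_def by auto
    then have "card I \<le> card {a}" by (intro card_mono) auto
    with I(3) show ?thesis by simp
  qed
qed

lemma mrank_insert_nonparallel:
  assumes "incidences K m a \<noteq> {}" "incidences K m c \<noteq> {}" "c \<notin> parallel_class K m a"
  shows "2 \<le> mrank (partial_transversal K m) (insert c (parallel_class K m a))"
proof -
  obtain i j where ij: "i \<in> incidences K m a" "j \<in> incidences K m c" "i \<noteq> j"
    using assms unfolding parallel_class_def by blast
  have "c \<noteq> a" using assms(3) self_in_parallel_class[of a K m] by auto
  have "{a, c} \<subseteq> insert c (parallel_class K m a)" by (simp add: self_in_parallel_class)
  from transversal.card_le_mrank[OF this partial_transversal_pair[OF ij]]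
  have "card {a, c} \<le> mrank (partial_transversal K m) (insert c (parallel_class K m a))" .
  with \<open>c \<noteq> a\<close> show ?thesis by simp
qed

text \<open>Replacing a parallel element by \<open>a\<close> in a basis of \<open>insert b F\<close> yields an independent subset
  of \<open>F\<close>; \<open>a\<close> itself cannot be in that basis, as both would need the same block.\<close>
lemma mrank_insert_parallel:
  assumes "b \<in> parallel_class K m a" "a \<in> F"
  shows "mrank (partial_transversal K m) (insert b F) = mrank (partial_transversal K m) F"
proof (cases "b = a")
  case True
  with assms(2) show ?thesis by (simp add: insert_absorb)
next
  case False
  then obtain i where a: "incidences K m a = {i}" and b: "incidences K m b = {i}"
    using assms(1) unfolding parallel_class_def by auto
  obtain I where I: "I \<subseteq> insert b F" "partial_transversal K m I"
    "card I = mrank (partial_transversal K m) (insert b F)"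
    by (rule transversal.mrank_witness)
  have "mrank (partial_transversal K m) (insert b F) \<le> mrank (partial_transversal K m) F"
  proof (cases "b \<in> I")
    case False
    with I show ?thesis by (metis subset_insert transversal.card_le_mrank)
  next
    case True
    have "a \<notin> I"
    proof
      assume "a \<in> I"
      obtain f where "inj_on f I" "\<forall>x\<in>I. f x \<in> incidences K m x"
        using I(2) unfolding partial_transversal_iff_incidences by blast
      with \<open>a \<in> I\<close> \<open>b \<in> I\<close> a b have "f a = f b" by (metis singletonD)
      with \<open>inj_on f I\<close> \<open>a \<in> I\<close> \<open>b \<in> I\<close> \<open>b \<noteq> a\<close> show False
        by (auto dest: inj_onD)
    qed
    let ?J = "insert a (I - {b})"
    have "partial_transversal K m ?J"
      using partial_transversal_exchange[OF I(2) True \<open>a \<notin> I\<close>] a b by simp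
    moreover have "?J \<subseteq> F" using I(1) assms(2) by auto
    moreover have "card ?J = card I"
    proof -
      have "finite I" using I(2) by (simp add: partial_transversal_def)
      then have "card ?J = Suc (card (I - {b}))"
        using \<open>a \<notin> I\<close> by (intro card_insert_disjoint) auto
      also have "\<dots> = card I" using card_Suc_Diff1[OF \<open>finite I\<close> True] .
      finally show ?thesis .
    qed
    ultimately show ?thesis using I(3) transversal.card_le_mrank by metis
  qed
  moreover have "mrank (partial_transversal K m) F \<le> mrank (partial_transversal K m) (insert b F)"
    by (rule transversal.mrank_mono) auto
  ultimately show ?thesis by (rule antisym)
qed

context
  fixes E :: "'a set" and K :: "nat \<Rightarrow> 'a set" and m :: nat
  assumes covering: "is_covering E K m"
begin

lemma incidences_nonempty: "a \<in> E \<Longrightarrow> incidences K m a \<noteq> {}"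
  using covering unfolding is_covering_def incidences_def by auto

lemma incidences_nonempty_imp_mem: "incidences K m a \<noteq> {} \<Longrightarrow> a \<in> E"
  using covering unfolding is_covering_def incidences_def by auto

lemma parallel_class_subset: "a \<in> E \<Longrightarrow> parallel_class K m a \<subseteq> E"
  unfolding parallel_class_def using incidences_nonempty_imp_mem by fastforce

lemma mcl_empty_transversal: "mcl E (partial_transversal K m) {} = {}"
proof (rule transversal.mcl_empty_eq_empty)
  fix a assume "a \<in> E"
  then obtain i where "i \<in> incidences K m a" using incidences_nonempty by blast
  then show "partial_transversal K m {a}"
    unfolding partial_transversal_iff_incidences by (intro conjI exI[of _ "\<lambda>_. i"]) auto
qed

lemma parallel_class_closed:
  assumes "a \<in> E"
  shows "parallel_class K m a \<in> closed_sets E (partial_transversal K m)"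
proof -
  have "c \<in> parallel_class K m a" if "c \<in> mcl E (partial_transversal K m) (parallel_class K m a)" for c
  proof (rule ccontr)
    assume "c \<notin> parallel_class K m a"
    moreover have "c \<in> E" using that unfolding mcl_def by simp
    ultimately have "2 \<le> mrank (partial_transversal K m) (insert c (parallel_class K m a))"
      by (intro mrank_insert_nonparallel incidences_nonempty assms)
    with that mrank_parallel_class_le_1[of K m a] show False unfolding mcl_def by simp
  qed
  moreover have "parallel_class K m a \<subseteq> mcl E (partial_transversal K m) (parallel_class K m a)"
    using parallel_class_subset[OF assms] unfolding mcl_def by (auto simp: insert_absorb)
  ultimately show ?thesis
    using parallel_class_subset[OF assms] unfolding closed_sets_def by blast
qed

lemma parallel_class_subset_closed:
  assumes F: "F \<in> closed_sets E (partial_transversal K m)" and "a \<in> F"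
  shows "parallel_class K m a \<subseteq> F"
proof
  fix b assume b: "b \<in> parallel_class K m a"
  have "a \<in> E" "mcl E (partial_transversal K m) F = F" using F \<open>a \<in> F\<close> unfolding closed_sets_def by auto
  with b show "b \<in> F"
    using mrank_insert_parallel[OF b \<open>a \<in> F\<close>] parallel_class_subset unfolding mcl_def by blast
qed

lemma lattice_atoms_transversal: "lattice_atoms E (partial_transversal K m) = parallel_class K m ` E"
  unfolding lattice_atoms_def mcl_empty_transversal
  by (rule minimal_nonempty_members_eq_image[OF parallel_class_closed self_in_parallel_class
        parallel_class_subset_closed parallel_class_sym]) (auto simp: closed_sets_def)

end

lemma mem_private_part_iff: "i < m \<Longrightarrow> x \<in> private_part K m i \<longleftrightarrow> incidences K m x = {i}"
  unfolding private_part_def incidences_def by (auto simp: set_eq_iff)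

lemma incidences_eq_singletonD:
  assumes "incidences K m x = {i}"
  shows "i < m \<and> x \<in> private_part K m i"
proof
  have "i \<in> incidences K m x" using assms by simp
  then show "i < m" unfolding incidences_def by simp
  with assms show "x \<in> private_part K m i" by (simp add: mem_private_part_iff)
qed

lemma parallel_class_eq_private_part:
  assumes "incidences K m a = {i}"
  shows "parallel_class K m a = private_part K m i"
proof (rule set_eqI)
  fix b
  have "b \<in> parallel_class K m a \<longleftrightarrow> incidences K m b = {i}"
    using assms unfolding parallel_class_def by (cases "b = a") simp_all
  also have "\<dots> \<longleftrightarrow> b \<in> private_part K m i"
    using incidences_eq_singletonD[OF assms] by (simp add: mem_private_part_iff)
  finally show "b \<in> parallel_class K m a \<longleftrightarrow> b \<in> private_part K m i" .
qed

lemma parallel_class_eq_singleton: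
  "\<nexists>i. incidences K m a = {i} \<Longrightarrow> parallel_class K m a = {a}"
  unfolding parallel_class_def by simp

lemma parallel_classes_eq_private_parts_and_singletons:
  assumes "is_covering E K m"
  defines "A \<equiv> {private_part K m i | i. i < m \<and> private_part K m i \<noteq> {}}"
  shows "parallel_class K m ` E = A \<union> {{x} | x. x \<in> E - \<Union>A}"
proof -
  have single_block: "x \<in> \<Union>A \<longleftrightarrow> (\<exists>i. incidences K m x = {i})" for x
  proof
    assume "x \<in> \<Union>A"
    then obtain i where "i < m" "x \<in> private_part K m i" unfolding A_def by blast
    then show "\<exists>i. incidences K m x = {i}" by (auto simp: mem_private_part_iff)
  next
    assume "\<exists>i. incidences K m x = {i}"
    then obtain i where "incidences K m x = {i}" ..
    from incidences_eq_singletonD[OF this] have "i < m" "x \<in> private_part K m i" by simp_all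
    then show "x \<in> \<Union>A" unfolding A_def by blast
  qed
  have private_part_in_A: "parallel_class K m x \<in> A" if "incidences K m x = {i}" for x i
    using incidences_eq_singletonD[OF that] parallel_class_eq_private_part[OF that]
    unfolding A_def by blast
  show ?thesis
  proof (intro equalityI subsetI)
    fix D assume "D \<in> parallel_class K m ` E"
    then obtain x where x: "x \<in> E" "D = parallel_class K m x" by blast
    show "D \<in> A \<union> {{x} | x. x \<in> E - \<Union>A}"
    proof (cases "x \<in> \<Union>A")
      case True
      then obtain i where "incidences K m x = {i}" using single_block[of x] by blast
      with x private_part_in_A show ?thesis by blast
    next
      case False
      then have "parallel_class K m x = {x}"
        using single_block[of x] by (simp add: parallel_class_eq_singleton)
      with x False show ?thesis by blast
    qed
  next
    fix D assume "D \<in> A \<union> {{x} | x. x \<in> E - \<Union>A}"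
    then consider "D \<in> A" | x where "x \<in> E" "x \<notin> \<Union>A" "D = {x}" by blast
    then show "D \<in> parallel_class K m ` E"
    proof cases
      case 1
      then obtain i x where "i < m" "D = private_part K m i" "x \<in> D" unfolding A_def by blast
      then have x: "incidences K m x = {i}" by (simp add: mem_private_part_iff)
      then have "x \<in> E" using incidences_nonempty_imp_mem[OF assms(1)] by simp
      moreover have "D = parallel_class K m x"
        using \<open>D = private_part K m i\<close> parallel_class_eq_private_part[OF x] by simp
      ultimately show ?thesis by blast
    next
      case (2 x)
      then have "parallel_class K m x = {x}"
        using single_block[of x] by (simp add: parallel_class_eq_singleton)
      with 2 show ?thesis by blast
    qed
  qed
qed

theorem theorem2:
  fixes E :: "'a set" and K :: "nat \<Rightarrow> 'a set" and m :: nat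
  assumes "finite E" and "is_covering E K m"
  defines "A \<equiv> {K i - (\<Union>j\<in>{..<m} - {i}. K j) | i. i < m \<and> K i - (\<Union>j\<in>{..<m} - {i}. K j) \<noteq> {}}"
  defines "B \<equiv> E - \<Union>A"
  shows "A \<union> {{x} | x. x \<in> B} = lattice_atoms E (partial_transversal K m)"
  unfolding lattice_atoms_transversal[OF assms(2)]
    parallel_classes_eq_private_parts_and_singletons[OF assms(2)] A_def B_def private_part_def ..

end
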